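(* Let $p\ge2$ be an integer. Let $f$ be either the binary loop $C_p$ (with $n=2$) or the $n$-ary iterated group $f(x_1,\dots,x_n)=x_1+\dots+x_n$ of $\mathbb{Z}_p\times\mathbb{Z}_2$ ($n\ge2$), and for $i=1,\dots,n$ let $h_i$ be the $m_i$-ary iterated group of $D_p$, $h_i(z_1,\dots,z_{m_i})=z_1\circ\cdots\circ z_{m_i}$ ($m_i\ge1$). Then the MDS code $M=\{(x,\overline z_1,\dots,\overline z_n): x=f(h_1(\overline z_1),\dots,h_n(\overline z_n))\}\subseteq Q_{2p}^{1+m_1+\dots+m_n}$ is isotopically transitive.
   Context: Let $Q_{2p}=\{x_\zeta : x\in\mathbb{Z}_p,\ \zeta\in\{0,1\}\}$, with $0_0$ playing the role of $0$. Arithmetic on the main symbol is mod $p$, on subscripts mod $2$ ($\oplus$). The group $\mathbb{Z}_p\times\mathbb{Z}_2$: $x_\zeta+y_\xi=(x+y)_{\zeta\oplus\xi}$. The dihedral group $D_p$: $x_\zeta\circ y_\xi=((-1)^\xi x+y)_{\zeta\oplus\xi}$. The loop $C_p$: $x_\zeta\ast y_\xi=((-1)^\xi x+y+\zeta\xi)_{\zeta\oplus\xi}$. An isotopism of $Q_{2p}^N$ is a map $\overline{x}\mapsto(\tau_1x_1,\dots,\tau_Nx_N)$ with $\tau_i$ permutations of $Q_{2p}$; a set is isotopically transitive if the group of isotopisms mapping it onto itself acts transitively on it. *)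

theory Defs
  imports Main
begin

text \<open>Elements x_zeta of Q_{2p} are pairs (x, zeta) with x in {0..<p} and zeta a bool
  (False = 0, True = 1); 0_0 = (0, False).\<close>

definition Qset :: "int \<Rightarrow> (int \<times> bool) set" where
  "Qset p = {0..<p} \<times> UNIV"

definition zadd :: "int \<Rightarrow> int \<times> bool \<Rightarrow> int \<times> bool \<Rightarrow> int \<times> bool" where
  "zadd p a b = ((fst a + fst b) mod p, snd a \<noteq> snd b)"

definition dih :: "int \<Rightarrow> int \<times> bool \<Rightarrow> int \<times> bool \<Rightarrow> int \<times> bool" where
  "dih p a b = (((if snd b then - fst a else fst a) + fst b) mod p, snd a \<noteq> snd b)"

definition loopC :: "int \<Rightarrow> int \<times> bool \<Rightarrow> int \<times> bool \<Rightarrow> int \<times> bool" where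
  "loopC p a b = (((if snd b then - fst a else fst a) + fst b
                    + (if snd a \<and> snd b then 1 else 0)) mod p, snd a \<noteq> snd b)"

definition iter_op :: "('a \<Rightarrow> 'a \<Rightarrow> 'a) \<Rightarrow> 'a list \<Rightarrow> 'a" where
  "iter_op g xs = foldl g (hd xs) (tl xs)"

definition codeM :: "int \<Rightarrow> nat list \<Rightarrow> ((int \<times> bool) list \<Rightarrow> int \<times> bool) \<Rightarrow> (int \<times> bool) list set" where
  "codeM p ms f = {x # concat zs | x zs.
      length zs = length ms \<and>
      (\<forall>i<length ms. length (zs ! i) = ms ! i \<and> set (zs ! i) \<subseteq> Qset p) \<and>
      x = f (map (iter_op (dih p)) zs)}"

definition iso_apply :: "nat \<Rightarrow> (nat \<Rightarrow> 'a \<Rightarrow> 'a) \<Rightarrow> 'a list \<Rightarrow> 'a list" where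
  "iso_apply N \<tau> w = map (\<lambda>i. \<tau> i (w ! i)) [0..<N]"

definition isotopism :: "'a set \<Rightarrow> nat \<Rightarrow> (nat \<Rightarrow> 'a \<Rightarrow> 'a) \<Rightarrow> bool" where
  "isotopism Q N \<tau> \<longleftrightarrow> (\<forall>i<N. bij_betw (\<tau> i) Q Q)"

definition isotopically_transitive :: "'a set \<Rightarrow> nat \<Rightarrow> 'a list set \<Rightarrow> bool" where
  "isotopically_transitive Q N S \<longleftrightarrow>
     (\<forall>u\<in>S. \<forall>v\<in>S. \<exists>\<tau>. isotopism Q N \<tau> \<and> iso_apply N \<tau> ` S = S \<and> iso_apply N \<tau> u = v)"

end

theory Submission
  imports Defs "HOL-Algebra.Group"
begin

text \<open>Within a
  block, for any automorphism \<open>\<phi>\<close> of \<open>D\<^sub>p\<close> the coordinate permutations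
  \<open>z \<mapsto> C\<^sub>j\<^sub>-\<^sub>1\<inverse> \<circ> \<phi>(z) \<circ> C\<^sub>j\<close> (with \<open>C\<^sub>0 = 1\<close>) can be chosen to map the first word's block
  to the second's, and by telescoping they turn the block product \<open>h(z)\<close> into \<open>\<phi>(h(z)) \<circ> A\<close> for
  a constant \<open>A\<close>.  In \<open>\<int>\<^sub>p \<times> \<int>\<^sub>2\<close> one has \<open>x + A = \<phi>\<^sub>A(x) \<circ> A\<close>, where \<open>\<phi>\<^sub>A\<close> negates the
  main symbol iff \<open>A\<close> has subscript 1; so suitably twisted blocks add a constant to
  \<open>f(h\<^sub>1, \<dots>, h\<^sub>n)\<close>, which a translation of the first coordinate compensates.  For \<open>C\<^sub>p\<close> an
  explicit autotopism whose first two components have this shape plays the same role.  Finiteness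
  turns the resulting injection of the code into itself into a bijection.\<close>

definition apply_each :: "('a \<Rightarrow> 'b) list \<Rightarrow> 'a list \<Rightarrow> 'b list" where
  "apply_each fs xs = map2 (\<lambda>f x. f x) fs xs"

lemma length_apply_each [simp]: "length (apply_each fs xs) = min (length fs) (length xs)"
  by (simp add: apply_each_def)

lemma apply_each_append:
  "length fs = length xs \<Longrightarrow> apply_each (fs @ gs) (xs @ ys) = apply_each fs xs @ apply_each gs ys"
  by (simp add: apply_each_def)

lemma apply_each_Nil [simp]: "apply_each [] xs = []" "apply_each fs [] = []"
  by (simp_all add: apply_each_def)

lemma apply_each_Cons [simp]: "apply_each (f # fs) (x # xs) = f x # apply_each fs xs"
  by (simp add: apply_each_def)

lemma apply_each_concat:
  "map length fss = map length xss \<Longrightarrow>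
   apply_each (concat fss) (concat xss) = concat (map2 apply_each fss xss)"
proof (induction fss xss rule: list_induct2')
  case (4 fs fss xs xss)
  then show ?case by (simp add: apply_each_append)
qed simp_all

lemma set_apply_each_subset:
  "\<forall>f\<in>set fs. bij_betw f A A \<Longrightarrow> set xs \<subseteq> A \<Longrightarrow> set (apply_each fs xs) \<subseteq> A"
  by (auto simp: apply_each_def dest: set_zip_leftD set_zip_rightD bij_betw_apply)

lemma inj_on_apply_each:
  assumes "\<forall>f\<in>set fs. inj_on f A"
  shows "inj_on (apply_each fs) {xs. length xs = length fs \<and> set xs \<subseteq> A}"
proof (rule inj_onI, rule nth_equalityI)
  fix xs ys assume xs: "xs \<in> {xs. length xs = length fs \<and> set xs \<subseteq> A}"
    and ys: "ys \<in> {xs. length xs = length fs \<and> set xs \<subseteq> A}"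
    and eq: "apply_each fs xs = apply_each fs ys"
  then show "length xs = length ys" by simp
  fix k assume "k < length xs"
  then have "(fs ! k) (xs ! k) = (fs ! k) (ys ! k)" "fs ! k \<in> set fs" "xs ! k \<in> A" "ys ! k \<in> A"
    using xs ys arg_cong[OF eq, of "\<lambda>zs. zs ! k"] by (auto simp: apply_each_def)
  then show "xs ! k = ys ! k" using assms by (auto dest: inj_onD)
qed

lemma iso_apply_nth:
  "length fs = N \<Longrightarrow> length w = N \<Longrightarrow> iso_apply N (nth fs) w = apply_each fs w"
  by (auto simp: iso_apply_def apply_each_def intro: nth_equalityI)

lemma iter_op_closed:
  assumes "\<And>a b. a \<in> A \<Longrightarrow> b \<in> A \<Longrightarrow> g a b \<in> A" and "xs \<noteq> []" and "set xs \<subseteq> A"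
  shows "iter_op g xs \<in> A"
proof -
  have "foldl g a ys \<in> A" if "a \<in> A" "set ys \<subseteq> A" for a ys
    using that by (induction ys arbitrary: a) (auto simp: assms(1))
  then show ?thesis using assms(2,3) by (cases xs) (auto simp: iter_op_def)
qed

lemma iter_op_snoc: "xs \<noteq> [] \<Longrightarrow> iter_op g (xs @ [y]) = g (iter_op g xs) y"
  by (cases xs) (auto simp: iter_op_def)

lemma (in monoid) iter_op_eq_foldl:
  "xs \<noteq> [] \<Longrightarrow> set xs \<subseteq> carrier G \<Longrightarrow> iter_op (\<otimes>) xs = foldl (\<otimes>) \<one> xs"
  by (cases xs) (auto simp: iter_op_def)

lemma (in abel_semigroup) iter_op_map2:
  "length xs = length ys \<Longrightarrow> xs \<noteq> [] \<Longrightarrow> iter_op f (map2 f xs ys) = f (iter_op f xs) (iter_op f ys)"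
proof (induction xs ys rule: rev_induct2)
  case (4 x xs y ys)
  show ?case
  proof (cases "xs = []")
    case True
    then show ?thesis using "4" by (simp add: iter_op_def)
  next
    case False
    then have "ys \<noteq> []" "map2 f xs ys \<noteq> []" using "4" by auto
    then show ?thesis using False "4" by (simp add: iter_op_snoc ac_simps)
  qed
qed simp_all

section \<open>Twisting a product by coordinate permutations\<close>

lemma (in monoid) foldl_mult_closed:
  "a \<in> carrier G \<Longrightarrow> set xs \<subseteq> carrier G \<Longrightarrow> foldl (\<otimes>) a xs \<in> carrier G"
  by (induction xs arbitrary: a) auto

lemma (in group) bij_betw_mult_both_sides:
  assumes "a \<in> carrier G" "b \<in> carrier G"
  shows "bij_betw (\<lambda>x. a \<otimes> x \<otimes> b) (carrier G) (carrier G)"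
  by (rule bij_betw_byWitness[where f' = "\<lambda>y. inv a \<otimes> y \<otimes> inv b"])
     (use assms in \<open>auto simp: m_assoc, auto simp flip: m_assoc\<close>)

lemma (in group) bij_betw_mult_iso_mult:
  assumes "\<phi> \<in> iso G G" and "a \<in> carrier G" "b \<in> carrier G"
  shows "bij_betw (\<lambda>z. a \<otimes> \<phi> z \<otimes> b) (carrier G) (carrier G)"
proof -
  have "bij_betw ((\<lambda>x. a \<otimes> x \<otimes> b) \<circ> \<phi>) (carrier G) (carrier G)"
    using assms bij_betw_mult_both_sides[of a b] by (auto simp: iso_def intro: bij_betw_trans)
  then show ?thesis by (simp add: comp_def)
qed

lemma (in group) perms_twisting_product:
  assumes \<phi>: "\<phi> \<in> iso G G"
    and "length us = length vs" "set us \<subseteq> carrier G" "set vs \<subseteq> carrier G"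
  shows "\<exists>Ts A. length Ts = length us \<and> (\<forall>T\<in>set Ts. bij_betw T (carrier G) (carrier G)) \<and>
    apply_each Ts us = vs \<and> A \<in> carrier G \<and>
    (\<forall>zs. length zs = length us \<longrightarrow> set zs \<subseteq> carrier G \<longrightarrow>
       foldl (\<otimes>) \<one> (apply_each Ts zs) = \<phi> (foldl (\<otimes>) \<one> zs) \<otimes> A)"
  using assms(2-)
proof (induction us vs rule: rev_induct2)
  case 1
  have "\<phi> \<one> = \<one>" using \<phi> hom_one[of \<phi> G G] by (simp add: iso_def is_group)
  then show ?case by (intro exI[of _ "[]"] exI[of _ \<one>]) auto
next
  case (4 u us v vs)
  then obtain Ts A where len: "length Ts = length us"
    and bij: "\<forall>T\<in>set Ts. bij_betw T (carrier G) (carrier G)"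
    and maps: "apply_each Ts us = vs" and A: "A \<in> carrier G"
    and prod: "\<And>zs. length zs = length us \<Longrightarrow> set zs \<subseteq> carrier G \<Longrightarrow>
       foldl (\<otimes>) \<one> (apply_each Ts zs) = \<phi> (foldl (\<otimes>) \<one> zs) \<otimes> A"
    by auto
  have \<phi>_hom: "\<phi> \<in> hom G G" using \<phi> by (simp add: iso_def)
  have u: "u \<in> carrier G" and v: "v \<in> carrier G" using "4.prems" by auto
  have \<phi>u: "\<phi> u \<in> carrier G" using \<phi>_hom u by (rule hom_in_carrier)
  define A' where "A' = inv (\<phi> u) \<otimes> A \<otimes> v"
  define T where "T = (\<lambda>z. inv A \<otimes> \<phi> z \<otimes> A')"
  have A': "A' \<in> carrier G" using A v \<phi>u by (simp add: A'_def)
  have T_bij: "bij_betw T (carrier G) (carrier G)"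
    unfolding T_def using \<phi> A A' by (simp add: bij_betw_mult_iso_mult)
  have cancel: "x \<otimes> (inv x \<otimes> y) = y" "inv x \<otimes> (x \<otimes> y) = y"
    if "x \<in> carrier G" "y \<in> carrier G" for x y
    using that by (simp_all flip: m_assoc)
  have "T u = v" using A v \<phi>u by (simp add: T_def A'_def m_assoc cancel)
  have "foldl (\<otimes>) \<one> (apply_each (Ts @ [T]) zs) = \<phi> (foldl (\<otimes>) \<one> zs) \<otimes> A'"
    if zs_len: "length zs = length (us @ [u])" and zs_carrier: "set zs \<subseteq> carrier G" for zs
  proof -
    obtain zs' z where zs: "zs = zs' @ [z]"
      using zs_len by (cases zs rule: rev_exhaust) auto
    have zs': "length zs' = length us" "set zs' \<subseteq> carrier G" and z: "z \<in> carrier G"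
      using zs_len zs_carrier zs by auto
    have P: "foldl (\<otimes>) \<one> zs' \<in> carrier G" using zs'(2) by (simp add: foldl_mult_closed)
    have "foldl (\<otimes>) \<one> (apply_each (Ts @ [T]) zs) = \<phi> (foldl (\<otimes>) \<one> zs') \<otimes> A \<otimes> T z"
      using len zs' by (simp add: zs apply_each_append prod)
    also have "\<dots> = \<phi> (foldl (\<otimes>) \<one> zs') \<otimes> \<phi> z \<otimes> A'"
      using A A' P z hom_in_carrier[OF \<phi>_hom] by (simp add: T_def m_assoc cancel)
    also have "\<dots> = \<phi> (foldl (\<otimes>) \<one> zs) \<otimes> A'"
      using P z by (simp add: zs hom_mult[OF \<phi>_hom])
    finally show ?thesis .
  qed
  then show ?case
    using len bij maps A' T_bij \<open>T u = v\<close>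
    by (intro exI[of _ "Ts @ [T]"] exI[of _ A']) (auto simp: apply_each_append)
qed (simp_all)

section \<open>Codes over words split into blocks\<close>

definition blocks :: "'a set \<Rightarrow> nat list \<Rightarrow> 'a list list set" where
  "blocks A ms = {zs. map length zs = ms \<and> set (concat zs) \<subseteq> A}"

lemma mem_blocks_iff:
  "zs \<in> blocks A ms \<longleftrightarrow> length zs = length ms \<and> (\<forall>i<length ms. length (zs ! i) = ms ! i \<and> set (zs ! i) \<subseteq> A)"
proof
  have block_subset: "set (zs ! i) \<subseteq> set (concat zs)" if "i < length zs" for i
    using that nth_mem by fastforce
  assume "zs \<in> blocks A ms"
  then show "length zs = length ms \<and> (\<forall>i<length ms. length (zs ! i) = ms ! i \<and> set (zs ! i) \<subseteq> A)"
    using block_subset unfolding blocks_def by fastforce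
next
  assume "length zs = length ms \<and> (\<forall>i<length ms. length (zs ! i) = ms ! i \<and> set (zs ! i) \<subseteq> A)"
  then show "zs \<in> blocks A ms"
    by (auto simp: blocks_def in_set_conv_nth intro: nth_equalityI) (metis nth_mem subsetD)
qed

lemma length_concat_blocks: "zs \<in> blocks A ms \<Longrightarrow> length (concat zs) = sum_list ms"
  by (auto simp: blocks_def length_concat)

lemma map2_apply_each_in_blocks:
  assumes "Ts \<in> blocks {T. bij_betw T Q Q} ms" and "zs \<in> blocks Q ms"
  shows "map2 apply_each Ts zs \<in> blocks Q ms"
proof -
  have lengths: "map length Ts = map length zs" using assms by (simp add: blocks_def)
  then have "map length (map2 apply_each Ts zs) = map length zs"
    by (induction Ts zs rule: list_induct2') simp_all
  moreover have "set (concat (map2 apply_each Ts zs)) \<subseteq> Q"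
    using assms set_apply_each_subset[of "concat Ts" Q "concat zs"]
    by (auto simp: apply_each_concat[OF lengths, symmetric] blocks_def)
  ultimately show ?thesis using assms(2) by (simp add: blocks_def)
qed

lemma blockwise_isotopism:
  fixes F :: "'a list list \<Rightarrow> 'a"
  assumes "finite Q" and F_closed: "\<forall>zs\<in>blocks Q ms. F zs \<in> Q"
    and Ts: "Ts \<in> blocks {T. bij_betw T Q Q} ms" and \<gamma>: "bij_betw \<gamma> Q Q"
    and commute: "\<forall>zs\<in>blocks Q ms. \<gamma> (F zs) = F (map2 apply_each Ts zs)"
  defines "S \<equiv> {F zs # concat zs | zs. zs \<in> blocks Q ms}" and "N \<equiv> 1 + sum_list ms"
    and "\<tau> \<equiv> nth (\<gamma> # concat Ts)"
  shows "isotopism Q N \<tau>" and "iso_apply N \<tau> ` S = S"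
    and "\<And>zs. zs \<in> blocks Q ms \<Longrightarrow>
           iso_apply N \<tau> (F zs # concat zs) = F (map2 apply_each Ts zs) # concat (map2 apply_each Ts zs)"
proof -
  have bijections: "\<forall>f\<in>set (\<gamma> # concat Ts). bij_betw f Q Q" using Ts \<gamma> by (auto simp: blocks_def)
  have length_\<tau>: "length (\<gamma> # concat Ts) = N" using Ts by (simp add: N_def length_concat_blocks)
  show "isotopism Q N \<tau>"
    using bijections length_\<tau> unfolding isotopism_def \<tau>_def by (metis nth_mem)
  show image: "iso_apply N \<tau> (F zs # concat zs) = F (map2 apply_each Ts zs) # concat (map2 apply_each Ts zs)"
    if zs: "zs \<in> blocks Q ms" for zs
  proof -
    have "iso_apply N \<tau> (F zs # concat zs) = \<gamma> (F zs) # apply_each (concat Ts) (concat zs)"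
      using zs length_\<tau> by (simp add: \<tau>_def iso_apply_nth N_def length_concat_blocks)
    then show ?thesis
      using zs Ts by (simp add: apply_each_concat blocks_def commute)
  qed
  have words: "S \<subseteq> {w. length w = N \<and> set w \<subseteq> Q}"
    using F_closed by (auto simp: S_def N_def length_concat_blocks) (auto simp: blocks_def)
  have "iso_apply N \<tau> ` S \<subseteq> S"
    using image map2_apply_each_in_blocks[OF Ts] by (auto simp: S_def)
  moreover have "inj_on (iso_apply N \<tau>) S"
  proof (rule inj_on_subset[OF _ words])
    show "inj_on (iso_apply N \<tau>) {w. length w = N \<and> set w \<subseteq> Q}"
      using inj_on_apply_each[of "\<gamma> # concat Ts" Q] bijections length_\<tau>
      by (auto simp: \<tau>_def iso_apply_nth bij_betw_def inj_on_def)
  qed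
  moreover have "finite S"
    using finite_subset[OF words] finite_lists_length_eq[OF \<open>finite Q\<close>] by (simp add: conj_commute)
  ultimately show "iso_apply N \<tau> ` S = S" by (rule endo_inj_surj[rotated])
qed

lemma isotopically_transitive_blockwise:
  fixes F :: "'a list list \<Rightarrow> 'a"
  assumes "finite Q" and F_closed: "\<forall>zs\<in>blocks Q ms. F zs \<in> Q"
    and autotopy: "\<And>zu zv. zu \<in> blocks Q ms \<Longrightarrow> zv \<in> blocks Q ms \<Longrightarrow>
      \<exists>Ts \<gamma>. Ts \<in> blocks {T. bij_betw T Q Q} ms \<and> map2 apply_each Ts zu = zv \<and> bij_betw \<gamma> Q Q \<and>
             (\<forall>zs\<in>blocks Q ms. \<gamma> (F zs) = F (map2 apply_each Ts zs))"
  shows "isotopically_transitive Q (1 + sum_list ms) {F zs # concat zs | zs. zs \<in> blocks Q ms}"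
  unfolding isotopically_transitive_def
proof (intro ballI)
  fix u v assume "u \<in> {F zs # concat zs | zs. zs \<in> blocks Q ms}" "v \<in> {F zs # concat zs | zs. zs \<in> blocks Q ms}"
  then obtain zu zv where u: "u = F zu # concat zu" "zu \<in> blocks Q ms"
    and v: "v = F zv # concat zv" "zv \<in> blocks Q ms" by blast
  then obtain Ts \<gamma> where Ts: "Ts \<in> blocks {T. bij_betw T Q Q} ms" and zu_zv: "map2 apply_each Ts zu = zv"
    and \<gamma>: "bij_betw \<gamma> Q Q" and commute: "\<forall>zs\<in>blocks Q ms. \<gamma> (F zs) = F (map2 apply_each Ts zs)"
    using autotopy by blast
  note iso = blockwise_isotopism[OF \<open>finite Q\<close> F_closed Ts \<gamma> commute]
  show "\<exists>\<tau>. isotopism Q (1 + sum_list ms) \<tau> \<and>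
      iso_apply (1 + sum_list ms) \<tau> ` {F zs # concat zs | zs. zs \<in> blocks Q ms} = {F zs # concat zs | zs. zs \<in> blocks Q ms} \<and>
      iso_apply (1 + sum_list ms) \<tau> u = v"
    using iso(1,2) iso(3)[OF u(2)] zu_zv u(1) v(1) by blast
qed

section \<open>The dihedral group and the code \<open>M\<close>\<close>

definition Dih :: "int \<Rightarrow> (int \<times> bool) monoid" where
  "Dih p = \<lparr>carrier = Qset p, mult = dih p, one = (0, False)\<rparr>"

lemma group_Dih:
  assumes "p > 0" shows "group (Dih p)"
proof (rule groupI)
  show "\<exists>y\<in>carrier (Dih p). y \<otimes>\<^bsub>Dih p\<^esub> x = \<one>\<^bsub>Dih p\<^esub>" if "x \<in> carrier (Dih p)" for x
    using that assms
    by (intro bexI[of _ "(if snd x then fst x else - fst x mod p, snd x)"])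
       (auto simp: Dih_def dih_def Qset_def mod_simps)
qed (use assms in \<open>auto simp: Dih_def dih_def Qset_def mod_simps algebra_simps\<close>)

definition dih_aut :: "int \<Rightarrow> int \<Rightarrow> int \<Rightarrow> int \<times> bool \<Rightarrow> int \<times> bool" where
  "dih_aut p s t a = ((s * fst a + (if snd a then t else 0)) mod p, snd a)"

lemma dih_aut_iso:
  assumes "p > 0" and "s = 1 \<or> s = -1"
  shows "dih_aut p s t \<in> iso (Dih p) (Dih p)"
proof (rule isoI)
  have mod_inner: "(a + b * (c mod p)) mod p = (a + b * c) mod p" for a b c :: int
    by (metis mod_add_right_eq mod_mult_right_eq)
  show "dih_aut p s t \<in> hom (Dih p) (Dih p)"
    using assms(1) by (auto simp: hom_def Dih_def dih_aut_def dih_def Qset_def mod_simps mod_inner algebra_simps)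
  have inverse: "dih_aut p s (- s * t) (dih_aut p s t a) = a"
    "dih_aut p s t (dih_aut p s (- s * t) a) = a" if "a \<in> Qset p" for a
    using that assms by (auto simp: dih_aut_def Qset_def mod_simps algebra_simps)
  show "bij_betw (dih_aut p s t) (carrier (Dih p)) (carrier (Dih p))"
    by (rule bij_betw_byWitness[where f' = "dih_aut p s (- s * t)"])
       (use inverse assms(1) in \<open>auto simp: Dih_def dih_aut_def Qset_def\<close>)
qed

lemma finite_Qset: "finite (Qset p)"
  by (simp add: Qset_def)

lemma dih_closed: "p > 0 \<Longrightarrow> dih p a b \<in> Qset p"
  by (simp add: dih_def Qset_def)

lemma iter_dih_closed: "p > 0 \<Longrightarrow> zs \<noteq> [] \<Longrightarrow> set zs \<subseteq> Qset p \<Longrightarrow> iter_op (dih p) zs \<in> Qset p"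
  by (rule iter_op_closed) (auto simp: dih_closed)

lemma dih_block_perms:
  assumes "p > 0" and "s = 1 \<or> s = -1"
    and "us \<noteq> []" "length vs = length us" "set us \<subseteq> Qset p" "set vs \<subseteq> Qset p"
  obtains Ts A where "length Ts = length us" "\<forall>T\<in>set Ts. bij_betw T (Qset p) (Qset p)"
    "apply_each Ts us = vs" "snd A = (snd (iter_op (dih p) us) \<noteq> snd (iter_op (dih p) vs))"
    "\<And>zs. length zs = length us \<Longrightarrow> set zs \<subseteq> Qset p \<Longrightarrow>
       iter_op (dih p) (apply_each Ts zs) = dih p (dih_aut p s t (iter_op (dih p) zs)) A"
proof -
  interpret D: group "Dih p" by (rule group_Dih[OF assms(1)])
  have iter_eq: "iter_op (dih p) xs = foldl (dih p) (0, False) xs"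
    if "xs \<noteq> []" "set xs \<subseteq> Qset p" for xs
    using D.iter_op_eq_foldl[of xs] that by (simp add: Dih_def)
  obtain Ts A where len: "length Ts = length us" and bij: "\<forall>T\<in>set Ts. bij_betw T (Qset p) (Qset p)"
    and maps: "apply_each Ts us = vs"
    and prod: "\<And>zs. length zs = length us \<Longrightarrow> set zs \<subseteq> Qset p \<Longrightarrow>
       foldl (dih p) (0, False) (apply_each Ts zs) = dih p (dih_aut p s t (foldl (dih p) (0, False) zs)) A"
    using D.perms_twisting_product[OF dih_aut_iso[OF assms(1,2)], of us vs t] assms(4-6)
    by (auto simp: Dih_def)
  have twisted: "iter_op (dih p) (apply_each Ts zs) = dih p (dih_aut p s t (iter_op (dih p) zs)) A"
    if "length zs = length us" "set zs \<subseteq> Qset p" for zs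
  proof -
    have "zs \<noteq> []" "apply_each Ts zs \<noteq> []"
      using that(1) assms(3) len by (auto simp flip: length_greater_0_conv)
    moreover have "set (apply_each Ts zs) \<subseteq> Qset p" using bij that(2) by (rule set_apply_each_subset)
    ultimately show ?thesis using that by (simp add: iter_eq prod)
  qed
  have "snd (iter_op (dih p) vs) = (snd (iter_op (dih p) us) \<noteq> snd A)"
    using twisted[of us] assms(5) maps by (simp add: dih_def dih_aut_def)
  then have "snd A = (snd (iter_op (dih p) us) \<noteq> snd (iter_op (dih p) vs))" by auto
  with len bij maps twisted show ?thesis using that by blast
qed

lemma codeM_eq_blocks:
  "codeM p ms f = {f (map (iter_op (dih p)) zs) # concat zs | zs. zs \<in> blocks (Qset p) ms}"
  unfolding codeM_def mem_blocks_iff by blast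

lemma iter_dih_blocks_closed:
  assumes "p > 0" "\<forall>i<length ms. ms ! i \<ge> 1" "zs \<in> blocks (Qset p) ms"
  shows "set (map (iter_op (dih p)) zs) \<subseteq> Qset p"
proof -
  have "iter_op (dih p) (zs ! i) \<in> Qset p" if "i < length zs" for i
    using assms that by (intro iter_dih_closed) (auto simp: mem_blocks_iff simp flip: length_greater_0_conv)
  then show ?thesis by (auto simp: in_set_conv_nth)
qed

section \<open>Outer operation \<open>\<int>\<^sub>p \<times> \<int>\<^sub>2\<close>\<close>

definition minus_one_pow :: "bool \<Rightarrow> int" where
  "minus_one_pow \<xi> = (if \<xi> then -1 else 1)"

lemma minus_one_pow_cases: "minus_one_pow \<xi> = 1 \<or> minus_one_pow \<xi> = -1"
  by (simp add: minus_one_pow_def)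

lemma abel_semigroup_zadd: "abel_semigroup (zadd p)"
  by unfold_locales (auto simp: zadd_def mod_simps ac_simps)

lemma zadd_closed: "p > 0 \<Longrightarrow> zadd p a b \<in> Qset p"
  by (simp add: zadd_def Qset_def)

lemma bij_zadd_right: "p > 0 \<Longrightarrow> bij_betw (\<lambda>y. zadd p y b) (Qset p) (Qset p)"
  by (rule bij_betw_byWitness[where f' = "\<lambda>y. zadd p y (- fst b, snd b)"])
     (auto simp: zadd_def Qset_def mod_simps)

lemma zadd_eq_twisted_dih: "zadd p a b = dih p (dih_aut p (minus_one_pow (snd b)) 0 a) b"
  by (cases a; cases b) (auto simp: zadd_def dih_def dih_aut_def minus_one_pow_def mod_simps ac_simps)

lemma dih_block_perms_translating:
  assumes "p > 0" and "us \<noteq> []" "length vs = length us" "set us \<subseteq> Qset p" "set vs \<subseteq> Qset p"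
  obtains Ts A where "length Ts = length us" "\<forall>T\<in>set Ts. bij_betw T (Qset p) (Qset p)"
    "apply_each Ts us = vs"
    "\<And>zs. length zs = length us \<Longrightarrow> set zs \<subseteq> Qset p \<Longrightarrow>
       iter_op (dih p) (apply_each Ts zs) = zadd p (iter_op (dih p) zs) A"
proof -
  txt \<open>The twist \<open>(-1)\<^bsup>snd A\<^esup>\<close> demanded by \<open>zadd_eq_twisted_dih\<close> can be fixed before \<open>A\<close> is
    chosen, because \<open>snd A\<close> is determined by \<open>us\<close> and \<open>vs\<close>.\<close>
  let ?\<epsilon> = "snd (iter_op (dih p) us) \<noteq> snd (iter_op (dih p) vs)"
  obtain Ts A where perms: "length Ts = length us" "\<forall>T\<in>set Ts. bij_betw T (Qset p) (Qset p)"
    "apply_each Ts us = vs" and A: "snd A = ?\<epsilon>"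
    and twisted: "\<And>zs. length zs = length us \<Longrightarrow> set zs \<subseteq> Qset p \<Longrightarrow>
       iter_op (dih p) (apply_each Ts zs) = dih p (dih_aut p (minus_one_pow ?\<epsilon>) 0 (iter_op (dih p) zs)) A"
    using dih_block_perms[OF assms(1) minus_one_pow_cases assms(2-)] by metis
  have "iter_op (dih p) (apply_each Ts zs) = zadd p (iter_op (dih p) zs) A"
    if "length zs = length us" "set zs \<subseteq> Qset p" for zs
    using twisted[OF that] by (simp only: zadd_eq_twisted_dih A)
  then show ?thesis by (rule that[OF perms])
qed

lemma codeM_sum_isotopically_transitive:
  assumes p: "p > 0" and ms: "\<forall>i<length ms. ms ! i \<ge> 1" "ms \<noteq> []"
  shows "isotopically_transitive (Qset p) (1 + sum_list ms) (codeM p ms (iter_op (zadd p)))"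
  unfolding codeM_eq_blocks
proof (rule isotopically_transitive_blockwise[OF finite_Qset])
  let ?h = "iter_op (dih p)" and ?Q = "Qset p" and ?n = "length ms"
  show "\<forall>zs\<in>blocks ?Q ms. iter_op (zadd p) (map ?h zs) \<in> ?Q"
  proof
    fix zs assume "zs \<in> blocks ?Q ms"
    then have "map ?h zs \<noteq> []" "set (map ?h zs) \<subseteq> ?Q"
      using iter_dih_blocks_closed[OF p ms(1)] ms(2) by (auto simp: mem_blocks_iff)
    then show "iter_op (zadd p) (map ?h zs) \<in> ?Q" by (rule iter_op_closed[OF zadd_closed[OF p]])
  qed
  fix zu zv assume zu: "zu \<in> blocks ?Q ms" and zv: "zv \<in> blocks ?Q ms"
  have "\<exists>Ts A. length Ts = ms ! i \<and> (\<forall>T\<in>set Ts. bij_betw T ?Q ?Q) \<and> apply_each Ts (zu ! i) = zv ! i \<and>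
     (\<forall>zs. length zs = ms ! i \<longrightarrow> set zs \<subseteq> ?Q \<longrightarrow> ?h (apply_each Ts zs) = zadd p (?h zs) A)"
    if i: "i < ?n" for i
  proof -
    have "zu ! i \<noteq> []" "length (zv ! i) = length (zu ! i)" "set (zu ! i) \<subseteq> ?Q" "set (zv ! i) \<subseteq> ?Q"
      and "length (zu ! i) = ms ! i"
      using zu zv i ms(1) by (auto simp: mem_blocks_iff simp flip: length_greater_0_conv)
    then show ?thesis by (metis dih_block_perms_translating[OF p])
  qed
  then obtain TT AA where TT: "\<And>i. i < ?n \<Longrightarrow> length (TT i) = ms ! i \<and> (\<forall>T\<in>set (TT i). bij_betw T ?Q ?Q) \<and>
      apply_each (TT i) (zu ! i) = zv ! i \<and>
      (\<forall>zs. length zs = ms ! i \<longrightarrow> set zs \<subseteq> ?Q \<longrightarrow> ?h (apply_each (TT i) zs) = zadd p (?h zs) (AA i))"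
    by metis
  define Ts where "Ts = map TT [0..<?n]"
  define B where "B = iter_op (zadd p) (map AA [0..<?n])"
  have "Ts \<in> blocks {T. bij_betw T ?Q ?Q} ms" using TT by (auto simp: Ts_def mem_blocks_iff)
  moreover have "map2 apply_each Ts zu = zv"
    using TT zu zv by (auto simp: Ts_def mem_blocks_iff intro: nth_equalityI)
  moreover have "zadd p (iter_op (zadd p) (map ?h zs)) B = iter_op (zadd p) (map ?h (map2 apply_each Ts zs))"
    if zs: "zs \<in> blocks ?Q ms" for zs
  proof -
    have "map ?h (map2 apply_each Ts zs) = map2 (zadd p) (map ?h zs) (map AA [0..<?n])"
      using TT zs by (auto simp: Ts_def mem_blocks_iff intro: nth_equalityI)
    moreover have "length (map ?h zs) = length (map AA [0..<?n])" "map ?h zs \<noteq> []"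
      using zs ms(2) by (auto simp: mem_blocks_iff)
    ultimately show ?thesis
      by (simp add: B_def abel_semigroup.iter_op_map2[OF abel_semigroup_zadd])
  qed
  ultimately show "\<exists>Ts \<gamma>. Ts \<in> blocks {T. bij_betw T ?Q ?Q} ms \<and> map2 apply_each Ts zu = zv \<and> bij_betw \<gamma> ?Q ?Q \<and>
      (\<forall>zs\<in>blocks ?Q ms. \<gamma> (iter_op (zadd p) (map ?h zs)) = iter_op (zadd p) (map ?h (map2 apply_each Ts zs)))"
    using bij_zadd_right[OF p, of B] by blast
qed

section \<open>Outer operation \<open>C\<^sub>p\<close>\<close>

text \<open>The third component \<open>\<gamma>\<close> of an autotopism \<open>(\<alpha>, \<beta>, \<gamma>)\<close> of \<open>C\<^sub>p\<close> whose components \<open>\<alpha>, \<beta>\<close> are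
  automorphisms of \<open>D\<^sub>p\<close> followed by right multiplication by \<open>A\<close> resp. \<open>B\<close>, obtained by solving
  \<open>\<gamma>(a * b) = \<alpha>(a) * \<beta>(b)\<close> for \<open>\<gamma>\<close>.\<close>

definition loopC_out :: "int \<Rightarrow> int \<times> bool \<Rightarrow> int \<times> bool \<Rightarrow> int \<times> bool \<Rightarrow> int \<times> bool" where
  "loopC_out p A B y =
     ((minus_one_pow (snd A) * fst y + minus_one_pow (snd B) * fst A + fst B
        + of_bool (snd B \<and> snd y \<noteq> snd A)) mod p,
      snd y \<noteq> (snd A \<noteq> snd B))"

lemma loopC_autotopism:
  "loopC_out p A B (loopC p a b) =
   loopC p (dih p (dih_aut p (minus_one_pow (snd B)) 0 a) A)
     (dih p (dih_aut p (minus_one_pow (snd A \<noteq> snd B)) (2 * fst A - of_bool (snd A \<noteq> snd B)) b) B)"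
proof -
  have dih_dih_aut: "dih p (dih_aut p s t u) v =
      (((if snd v then -1 else 1) * (s * fst u + (if snd u then t else 0)) + fst v) mod p, snd u \<noteq> snd v)"
    for s t u v by (auto simp: dih_def dih_aut_def mod_simps algebra_simps)
  have loopC_mod: "loopC p (x mod p, \<xi>) v = loopC p (x, \<xi>) v" "loopC p u (x mod p, \<xi>) = loopC p u (x, \<xi>)"
    for x \<xi> u v
  proof -
    have "(a - x mod p + b) mod p = (a - x + b) mod p" "(x mod p - a + b) mod p = (x - a + b) mod p" for a b
      by (metis add_diff_eq mod_add_left_eq mod_diff_right_eq, metis diff_add_eq mod_add_left_eq mod_diff_left_eq)
    then show "loopC p (x mod p, \<xi>) v = loopC p (x, \<xi>) v" "loopC p u (x mod p, \<xi>) = loopC p u (x, \<xi>)"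
      by (auto simp: loopC_def mod_simps)
  qed
  have loopC_out_mod: "loopC_out p A B (x mod p, \<xi>) = loopC_out p A B (x, \<xi>)" for x \<xi>
  proof -
    have "(v * (x mod p) + u) mod p = (v * x + u) mod p" for u v
      by (metis mod_add_left_eq mod_mult_right_eq)
    then show ?thesis by (simp add: loopC_out_def add.assoc)
  qed
  show ?thesis
    unfolding dih_dih_aut loopC_mod loopC_def[of p a b] loopC_out_mod
    by (cases a; cases b; cases A; cases B)
       (auto simp: loopC_def loopC_out_def minus_one_pow_def algebra_simps)
qed

lemma bij_betw_signed_shift:
  assumes "p > 0" and "\<sigma> = 1 \<or> \<sigma> = -1"
  shows "bij_betw (\<lambda>y. ((\<sigma> * fst y + c (snd y)) mod p, snd y \<noteq> \<epsilon>)) (Qset p) (Qset p)"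
proof -
  have "\<sigma> * \<sigma> = 1" using assms(2) by auto
  then have cancel: "\<sigma> * (\<sigma> * x + k) - \<sigma> * k = x" "\<sigma> * (\<sigma> * x - \<sigma> * k) + k = x" for x k
    by (simp_all add: algebra_simps flip: mult.assoc)
  have inner_mod: "(\<sigma> * ((\<sigma> * x + k) mod p) - \<sigma> * k) mod p = (\<sigma> * (\<sigma> * x + k) - \<sigma> * k) mod p"
    "(\<sigma> * ((\<sigma> * x - \<sigma> * k) mod p) + k) mod p = (\<sigma> * (\<sigma> * x - \<sigma> * k) + k) mod p" for x k
    by (metis mod_diff_left_eq mod_mult_right_eq, metis mod_add_left_eq mod_mult_right_eq)
  have xor_cancel: "((\<xi> = (\<not> \<epsilon>)) = (\<not> \<epsilon>)) = \<xi>" for \<xi> by blast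
  show ?thesis
    by (rule bij_betw_byWitness[where f' = "\<lambda>w. ((\<sigma> * fst w - \<sigma> * c (snd w \<noteq> \<epsilon>)) mod p, snd w \<noteq> \<epsilon>)"])
       (use assms(1) cancel inner_mod in \<open>auto simp: Qset_def xor_cancel\<close>)
qed

lemma bij_loopC_out: "p > 0 \<Longrightarrow> bij_betw (loopC_out p A B) (Qset p) (Qset p)"
  using bij_betw_signed_shift[OF _ minus_one_pow_cases, of p "snd A"
      "\<lambda>\<xi>. minus_one_pow (snd B) * fst A + fst B + of_bool (snd B \<and> \<xi> \<noteq> snd A)" "snd A \<noteq> snd B"]
  by (simp add: loopC_out_def[abs_def] add.assoc)

lemma loopC_closed: "p > 0 \<Longrightarrow> loopC p a b \<in> Qset p"
  by (simp add: loopC_def Qset_def)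

lemma blocks_two:
  "zs \<in> blocks A [m, m'] \<longleftrightarrow>
   (\<exists>z z'. zs = [z, z'] \<and> length z = m \<and> length z' = m' \<and> set z \<subseteq> A \<and> set z' \<subseteq> A)"
  by (auto simp: blocks_def map_eq_Cons_conv)

lemma codeM_loop_isotopically_transitive:
  assumes p: "p > 0" and ms: "ms = [m, m']" "m \<ge> 1" "m' \<ge> 1"
  shows "isotopically_transitive (Qset p) (1 + sum_list ms) (codeM p ms (\<lambda>ys. loopC p (ys ! 0) (ys ! 1)))"
  unfolding codeM_eq_blocks
proof (rule isotopically_transitive_blockwise[OF finite_Qset])
  let ?h = "iter_op (dih p)" and ?Q = "Qset p"
  show "\<forall>zs\<in>blocks ?Q ms. loopC p (map ?h zs ! 0) (map ?h zs ! 1) \<in> ?Q"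
    using loopC_closed[OF p] by blast
  fix zu zv assume "zu \<in> blocks ?Q ms" "zv \<in> blocks ?Q ms"
  then obtain u u' v v' where zu: "zu = [u, u']" and zv: "zv = [v, v']"
    and lengths: "length u = m" "length u' = m'" "length v = m" "length v' = m'"
    and sets: "set u \<subseteq> ?Q" "set u' \<subseteq> ?Q" "set v \<subseteq> ?Q" "set v' \<subseteq> ?Q"
    unfolding ms(1) blocks_two by blast
  define \<epsilon> where "\<epsilon> = (snd (?h u) \<noteq> snd (?h v))"
  define \<epsilon>' where "\<epsilon>' = (snd (?h u') \<noteq> snd (?h v'))"
  have "u \<noteq> []" "u' \<noteq> []" using lengths ms by auto
  obtain T A where T: "length T = m" "\<forall>t\<in>set T. bij_betw t ?Q ?Q" "apply_each T u = v"
    and A: "snd A = \<epsilon>"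
    and twisted: "\<And>zs. length zs = m \<Longrightarrow> set zs \<subseteq> ?Q \<Longrightarrow>
       ?h (apply_each T zs) = dih p (dih_aut p (minus_one_pow \<epsilon>') 0 (?h zs)) A"
    using dih_block_perms[OF p minus_one_pow_cases \<open>u \<noteq> []\<close>, of v "\<epsilon>'" 0] lengths sets
    unfolding \<epsilon>_def by metis
  obtain T' A' where T': "length T' = m'" "\<forall>t\<in>set T'. bij_betw t ?Q ?Q" "apply_each T' u' = v'"
    and A': "snd A' = \<epsilon>'"
    and twisted': "\<And>zs. length zs = m' \<Longrightarrow> set zs \<subseteq> ?Q \<Longrightarrow>
       ?h (apply_each T' zs) = dih p (dih_aut p (minus_one_pow (\<epsilon> \<noteq> \<epsilon>')) (2 * fst A - of_bool (\<epsilon> \<noteq> \<epsilon>')) (?h zs)) A'"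
    using dih_block_perms[OF p minus_one_pow_cases \<open>u' \<noteq> []\<close>, of v' "\<epsilon> \<noteq> \<epsilon>'" "2 * fst A - of_bool (\<epsilon> \<noteq> \<epsilon>')"]
      lengths sets
    unfolding \<epsilon>'_def by metis
  have "[T, T'] \<in> blocks {t. bij_betw t ?Q ?Q} ms" using T T' by (auto simp: ms(1) blocks_two)
  moreover have "map2 apply_each [T, T'] zu = zv" using T T' by (simp add: zu zv)
  moreover have "loopC_out p A A' (loopC p (map ?h zs ! 0) (map ?h zs ! 1)) =
      loopC p (map ?h (map2 apply_each [T, T'] zs) ! 0) (map ?h (map2 apply_each [T, T'] zs) ! 1)"
    if "zs \<in> blocks ?Q ms" for zs
    using that by (auto simp: ms(1) blocks_two twisted twisted' loopC_autotopism A A')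
  ultimately show "\<exists>Ts \<gamma>. Ts \<in> blocks {t. bij_betw t ?Q ?Q} ms \<and> map2 apply_each Ts zu = zv \<and>
      bij_betw \<gamma> ?Q ?Q \<and> (\<forall>zs\<in>blocks ?Q ms.
        \<gamma> (loopC p (map ?h zs ! 0) (map ?h zs ! 1)) = loopC p (map ?h (map2 apply_each Ts zs) ! 0) (map ?h (map2 apply_each Ts zs) ! 1))"
    using bij_loopC_out[OF p] by blast
qed

theorem theorem1:
  fixes p :: int and ms :: "nat list" and f :: "(int \<times> bool) list \<Rightarrow> int \<times> bool"
  assumes "p \<ge> 2"
    and "\<forall>i<length ms. ms ! i \<ge> 1"
    and "(length ms = 2 \<and> f = (\<lambda>ys. loopC p (ys ! 0) (ys ! 1)))
         \<or> (length ms \<ge> 2 \<and> f = iter_op (zadd p))"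
  shows "isotopically_transitive (Qset p) (1 + sum_list ms) (codeM p ms f)"
proof -
  have p: "p > 0" using assms(1) by simp
  from assms(3) show ?thesis
  proof
    assume loop: "length ms = 2 \<and> f = (\<lambda>ys. loopC p (ys ! 0) (ys ! 1))"
    then obtain m m' where ms: "ms = [m, m']"
      by (metis One_nat_def length_0_conv length_Suc_conv numeral_2_eq_2)
    moreover have "m \<ge> 1" "m' \<ge> 1" using assms(2) ms by (auto dest: spec[of _ 0] spec[of _ 1])
    ultimately show ?thesis using codeM_loop_isotopically_transitive[OF p] loop by blast
  next
    assume sum: "2 \<le> length ms \<and> f = iter_op (zadd p)"
    then have "ms \<noteq> []" by auto
    with sum assms(2) show ?thesis using codeM_sum_isotopically_transitive[OF p] by simp
  qed
qed

end
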